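(* (i) For every normalized one-parameter subgroup $\lambda$ of $\mathrm{SL}_2\times\mathrm{SL}_3$, the set $M^{\ominus}(\lambda)$ is contained in $M^{\ominus}(\lambda'_i)$ for some $i\in\{1,\dots,7\}$, where $\lambda'_1=(3,-3,2,2,-4)$, $\lambda'_2=(3,-3,2,0,-2)$, $\lambda'_3=(3,-3,4,-2,-2)$, $\lambda'_4=(0,0,2,-1,-1)$, $\lambda'_5=(1,-1,2,0,-2)$, $\lambda'_6=(0,0,1,1,-2)$, $\lambda'_7=(1,-1,0,0,0)$. (ii) A $(2,3)$-hypersurface $S=\{f=0\}\subset\mathbb{P}^1\times\mathbb{P}^2$ is not properly stable if $f$ is of one of the following forms, where $c,c_i$ denote cubic forms, $q,q_i$ quadratic forms, $l$ linear forms in the indicated variables and $\mu,\nu$ constants: (N1) $f=x_1^2c(y_0,y_1,y_2)+x_0x_1y_2q(y_0,y_1)+x_0^2y_2^2l(y_0,y_1,y_2)$; (N2) $f=x_1^2c_0(y_0,y_1,y_2)+x_0x_1[c_1(y_1,y_2)+y_0y_2l(y_1,y_2)]+\mu x_0^2y_2^3$; (N3) $f=x_1^2[c_1(y_1,y_2)+y_0q_1(y_1,y_2)+y_0^2l(y_1,y_2)]+x_0x_1[c_2(y_1,y_2)+y_0q_2(y_1,y_2)]+x_0^2c_0(y_1,y_2)$; (N4) $f=x_1^2[c_0(y_1,y_2)+y_0q_0(y_1,y_2)]+x_0x_1[c_1(y_1,y_2)+y_0q_1(y_1,y_2)]+x_0^2[c_2(y_1,y_2)+y_0q_2(y_1,y_2)]$;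 (N5) $f=x_1^2[c_0(y_1,y_2)+y_0q_0(y_1,y_2)+\mu y_0^2y_2]+x_0x_1[c_1(y_1,y_2)+y_0y_2l(y_1,y_2)]+x_0^2y_2(q_2(y_1,y_2)+\nu y_0y_2)$; (N6) $f=y_2\cdot q(x_0,x_1,y_0,y_1,y_2)$ with $q$ bihomogeneous of bidegree $(2,2)$; (N7) $f=x_1[x_0c_0(y_0,y_1,y_2)+x_1c_1(y_0,y_1,y_2)]$.
   Context: Bihomogeneous coordinates $(x_0,x_1;y_0,y_1,y_2)$ on $\mathbb{P}^1\times\mathbb{P}^2$; stability refers to GIT for the natural action of $\mathrm{SL}_2\times\mathrm{SL}_3$ on $\mathbb{P}(H^0(\mathcal{O}(2,3)))$. A tuple $(a,-a,b,c,-b-c)$ denotes the one-parameter subgroup $t\mapsto\mathrm{diag}(t^a,t^{-a},t^b,t^c,t^{-b-c})$ acting on $(x_0,x_1,y_0,y_1,y_2)$; it is normalized if $a\geq0$ and $b\geq c\geq-b-c$. The weight of the monomial $x_0^ux_1^{2-u}y_0^vy_1^wy_2^{3-v-w}$ with respect to it is $au-a(2-u)+bv+cw+(-b-c)(3-v-w)$. $M^{\ominus}(\lambda)$ is the set of bidegree $(2,3)$ monomials of non-positive weight with respect to $\lambda$. *)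

theory Defs
  imports "HOL-Analysis.Analysis"
begin

text \<open>A monomial x0^u x1^(2-u) y0^v y1^w y2^(3-v-w) is encoded by (u,v,w).
  A diagonal one-parameter subgroup (a,-a,b,c,-b-c) is encoded by (a,b,c).\<close>

definition mons :: "(nat \<times> nat \<times> nat) set" where
  "mons = {(u, v, w). u \<le> 2 \<and> v + w \<le> 3}"

definition wt :: "int \<times> int \<times> int \<Rightarrow> nat \<times> nat \<times> nat \<Rightarrow> int" where
  "wt l m = (case l of (a, b, c) \<Rightarrow> case m of (u, v, w) \<Rightarrow>
      a * int u - a * (2 - int u) + b * int v + c * int w + (- b - c) * (3 - int v - int w))"

definition Mneg :: "int \<times> int \<times> int \<Rightarrow> (nat \<times> nat \<times> nat) set" where
  "Mneg l = {m \<in> mons. wt l m \<le> 0}"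

definition normalized_ops :: "int \<times> int \<times> int \<Rightarrow> bool" where
  "normalized_ops l = (case l of (a, b, c) \<Rightarrow> a \<ge> 0 \<and> b \<ge> c \<and> c \<ge> - b - c)"

definition nontrivial_ops :: "int \<times> int \<times> int \<Rightarrow> bool" where
  "nontrivial_ops l = (l \<noteq> (0, 0, 0))"

definition lam' :: "nat \<Rightarrow> int \<times> int \<times> int" where
  "lam' i = (if i = 1 then (3, 2, 2) else if i = 2 then (3, 2, 0) else if i = 3 then (3, 4, -2)
     else if i = 4 then (0, 2, -1) else if i = 5 then (1, 2, 0) else if i = 6 then (0, 1, 1)
     else (1, 0, 0))"

text \<open>A bihomogeneous form is regarded as a polynomial function on C^2 x C^3.\<close>
type_synonym form23 = "complex^2 \<Rightarrow> complex^3 \<Rightarrow> complex"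

definition SL2 :: "(complex^2^2) set" where "SL2 = {A. det A = 1}"
definition SL3 :: "(complex^3^3) set" where "SL3 = {B. det B = 1}"

definition act :: "complex^2^2 \<Rightarrow> complex^3^3 \<Rightarrow> form23 \<Rightarrow> form23" where
  "act A B F = (\<lambda>x y. F (A *v x) (B *v y))"

definition orbit :: "form23 \<Rightarrow> form23 set" where
  "orbit F = {act A B F | A B. A \<in> SL2 \<and> B \<in> SL3}"

text \<open>Closedness of the orbit in the (finite-dimensional) space of forms; on this space
  pointwise convergence coincides with convergence of coefficients.\<close>
definition closed_orbit :: "form23 \<Rightarrow> bool" where
  "closed_orbit F = (\<forall>g h H. (\<forall>n. g n \<in> SL2 \<and> h n \<in> SL3) \<and>
      (\<forall>x y. (\<lambda>n. act (g n) (h n) F x y) \<longlonglongrightarrow> H x y) \<longrightarrow> H \<in> orbit F)"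

definition stabilizer :: "form23 \<Rightarrow> ((complex^2^2) \<times> (complex^3^3)) set" where
  "stabilizer F = {(A, B). A \<in> SL2 \<and> B \<in> SL3 \<and> act A B F = F}"

definition properly_stable :: "form23 \<Rightarrow> bool" where
  "properly_stable F = (F \<noteq> (\<lambda>x y. 0) \<and> closed_orbit F \<and> finite (stabilizer F))"

definition form3 :: "nat \<Rightarrow> (nat \<times> nat \<Rightarrow> complex) \<Rightarrow> complex^3 \<Rightarrow> complex" where
  "form3 d a y = (\<Sum>(v, w)\<in>{(v, w). v + w \<le> d}. a (v, w) * y$0 ^ v * y$1 ^ w * y$2 ^ (d - v - w))"

definition form2 :: "nat \<Rightarrow> (nat \<Rightarrow> complex) \<Rightarrow> complex \<Rightarrow> complex \<Rightarrow> complex" where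
  "form2 d a s t = (\<Sum>w\<le>d. a w * s ^ w * t ^ (d - w))"

definition form22 :: "(nat \<Rightarrow> nat \<times> nat \<Rightarrow> complex) \<Rightarrow> complex^2 \<Rightarrow> complex^3 \<Rightarrow> complex" where
  "form22 a x y = (\<Sum>u\<le>2. x$0 ^ u * x$1 ^ (2 - u) * form3 2 (a u) y)"

end

theory Submission
  imports Defs
begin

(* If every monomial of F has non-positive weight for a nontrivial one-parameter subgroup lambda,
   then F(lambda(t) x, lambda(t) y), which multiplies each monomial by t to the power of its weight,
   converges as t tends to infinity.  The limit is fixed by every lambda(s), so its stabilizer is
   infinite; if the orbit of F were closed, the limit would lie in it and have a stabilizer
   conjugate to that of F.  Each family of part (ii) has only monomials of non-positive weight for
   one of the lambda'_i.  Part (i) is a finite check: M^-(lambda) lies in M^-(lambda') iff every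
   monomial of positive lambda'-weight has positive lambda-weight, and the normalized cone is
   covered by seven linear regions, one for each lambda'_i. *)

lemma prod_power_int: "x \<noteq> 0 \<Longrightarrow> (\<Prod>i\<in>A. x powi f i) = x powi (\<Sum>i\<in>A. f i)"
  for x :: "'a::field"
  by (induction A rule: infinite_finite_induct) (simp_all add: power_int_add)

lemma power_int_inject_pos:
  fixes x y :: "'a::linordered_field"
  assumes "0 < x" "0 < y" "k \<noteq> 0" "x powi k = y powi k"
  shows "x = y"
proof -
  have ne: "a powi k \<noteq> b powi k" if "0 < a" "a < b" for a b :: 'a
    using that assms(3) power_int_strict_mono[of a b k] power_int_strict_antimono[of a b k]
    by (cases "0 < k") auto
  show ?thesis
  proof (cases x y rule: linorder_cases)
    case less then show ?thesis using ne assms by blast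
  next
    case greater then show ?thesis using ne[of y x] assms by simp
  qed
qed

lemma of_nat_Suc_power_int_inject:
  assumes "k \<noteq> 0"
  shows "(of_nat (Suc m) :: 'a::real_normed_field) powi k = of_nat (Suc n) powi k \<longleftrightarrow> m = n"
proof
  assume "(of_nat (Suc m) :: 'a) powi k = of_nat (Suc n) powi k"
  then have "norm ((of_nat (Suc m) :: 'a) powi k) = norm ((of_nat (Suc n) :: 'a) powi k)"
    by (rule arg_cong)
  then have "real (Suc m) powi k = real (Suc n) powi k"
    by (simp only: norm_power_int norm_of_nat)
  then show "m = n"
    using power_int_inject_pos[of "real (Suc m)" "real (Suc n)" k] assms by simp
qed simp

definition diag_mat :: "('n::finite \<Rightarrow> 'a::zero) \<Rightarrow> 'a^'n^'n" where
  "diag_mat d = (\<chi> i j. if i = j then d i else 0)"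

lemma diag_mat_mult_vec: "diag_mat d *v x = (\<chi> i. d i * x $ i)"
  for d :: "'n::finite \<Rightarrow> 'a::semiring_1"
  unfolding diag_mat_def matrix_vector_mult_def
  by (simp add: vec_eq_iff if_distrib[of "\<lambda>z. z * _"] cong: if_cong)

lemma diag_mat_mult: "diag_mat d ** diag_mat e = diag_mat (\<lambda>i. d i * e i)"
  for d :: "'n::finite \<Rightarrow> 'a::semiring_1"
  unfolding diag_mat_def matrix_matrix_mult_def
  by (simp add: vec_eq_iff if_distrib[of "\<lambda>z. z * _"] cong: if_cong)

lemma det_diag_mat: "det (diag_mat d) = prod d UNIV"
  by (simp add: det_diagonal diag_mat_def)

lemma diag_mat_inject: "diag_mat d = diag_mat e \<longleftrightarrow> d = e"
  by (simp add: diag_mat_def vec_eq_iff fun_eq_iff)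

lemma det_eq_1_obtain_inverse:
  fixes A :: "'a::field^'n^'n"
  assumes "det A = 1"
  obtains A' where "det A' = 1" "A ** A' = mat 1" "A' ** A = mat 1"
proof -
  obtain A' where A': "A ** A' = mat 1" "A' ** A = mat 1"
    using assms invertible_det_nz[of A] unfolding invertible_def by auto
  then have "det A' = 1"
    using assms det_mul[of A A'] by simp
  with A' that show ?thesis by blast
qed

lemma act_act: "act A B (act C D F) = act (C ** A) (D ** B) F"
  by (simp add: act_def matrix_vector_mul_assoc)

lemma finite_stabilizer_act:
  assumes A: "A \<in> SL2" and B: "B \<in> SL3" and fin: "finite (stabilizer F)"
  shows "finite (stabilizer (act A B F))"
proof -
  obtain A' where A': "det A' = 1" "A ** A' = mat 1" "A' ** A = mat 1"
    using A by (auto simp: SL2_def elim: det_eq_1_obtain_inverse)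
  obtain B' where B': "det B' = 1" "B ** B' = mat 1" "B' ** B = mat 1"
    using B by (auto simp: SL3_def elim: det_eq_1_obtain_inverse)
  let ?conj = "\<lambda>(X, Y). (A ** X ** A', B ** Y ** B')"
  have cancel: "A' ** (A ** X ** A') ** A = X" "B' ** (B ** Y ** B') ** B = Y" for X Y
    using A' B' by (metis matrix_mul_assoc matrix_mul_lid matrix_mul_rid)+
  have "inj ?conj"
    by (rule inj_on_inverseI[where g = "\<lambda>(X, Y). (A' ** X ** A, B' ** Y ** B)"]) (auto simp: cancel)
  moreover have "?conj ` stabilizer (act A B F) \<subseteq> stabilizer F"
  proof clarify
    fix X Y assume "(X, Y) \<in> stabilizer (act A B F)"
    then have XY: "X \<in> SL2" "Y \<in> SL3" "act (A ** X) (B ** Y) F = act A B F"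
      by (auto simp: stabilizer_def act_act)
    have "act (A ** X ** A') (B ** Y ** B') F = act A' B' (act (A ** X) (B ** Y) F)"
      by (simp add: act_act matrix_mul_assoc)
    also have "\<dots> = F"
      using A' B' by (simp add: XY(3) act_act) (simp add: act_def)
    finally show "(A ** X ** A', B ** Y ** B') \<in> stabilizer F"
      using A B A' B' XY by (simp add: stabilizer_def SL2_def SL3_def det_mul)
  qed
  ultimately show ?thesis
    using fin by (meson finite_imageD finite_subset inj_on_subset subset_UNIV)
qed

section \<open>Diagonal one-parameter subgroups\<close>

definition ops_mat :: "('n::finite \<Rightarrow> int) \<Rightarrow> complex \<Rightarrow> complex^'n^'n" where
  "ops_mat w t = diag_mat (\<lambda>i. t powi w i)"

definition weights2 :: "int \<times> int \<times> int \<Rightarrow> 2 \<Rightarrow> int" where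
  "weights2 l i = (case l of (a, b, c) \<Rightarrow> if i = 0 then a else - a)"

definition weights3 :: "int \<times> int \<times> int \<Rightarrow> 3 \<Rightarrow> int" where
  "weights3 l i = (case l of (a, b, c) \<Rightarrow> if i = 0 then b else if i = 1 then c else - b - c)"

definition ops_act :: "int \<times> int \<times> int \<Rightarrow> complex \<Rightarrow> form23 \<Rightarrow> form23" where
  "ops_act l t = act (ops_mat (weights2 l) t) (ops_mat (weights3 l) t)"

lemma ops_mat_mult: "ops_mat w s ** ops_mat w t = ops_mat w (s * t)"
  by (simp add: ops_mat_def diag_mat_mult power_int_mult_distrib)

lemma det_ops_mat: "t \<noteq> 0 \<Longrightarrow> det (ops_mat w t) = t powi (\<Sum>i\<in>UNIV. w i)"
  by (simp add: ops_mat_def det_diag_mat prod_power_int)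

lemma ops_mat_in_SL:
  assumes "t \<noteq> 0"
  shows "ops_mat (weights2 l) t \<in> SL2" "ops_mat (weights3 l) t \<in> SL3"
  using assms by (auto simp: SL2_def SL3_def det_ops_mat weights2_def weights3_def sum_2 sum_3 split: prod.split)

lemma ops_act_apply:
  "ops_act l t F x y = F (\<chi> i. t powi weights2 l i * x $ i) (\<chi> i. t powi weights3 l i * y $ i)"
  by (simp add: ops_act_def act_def ops_mat_def diag_mat_mult_vec)

lemma ops_mat_eq_iff: "ops_mat w s = ops_mat w t \<longleftrightarrow> (\<forall>i. s powi w i = t powi w i)"
  by (simp add: ops_mat_def diag_mat_inject fun_eq_iff)

lemma inj_ops_of_nat_Suc:
  assumes "nontrivial_ops l"
  shows "inj (\<lambda>n. (ops_mat (weights2 l) (of_nat (Suc n)), ops_mat (weights3 l) (of_nat (Suc n))))"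
proof (rule injI)
  obtain k where "k \<noteq> 0" and k: "k = weights2 l 0 \<or> k = weights3 l 0 \<or> k = weights3 l 1"
    using assms by (cases l) (auto simp: nontrivial_ops_def weights2_def weights3_def)
  fix m n
  assume "(ops_mat (weights2 l) (of_nat (Suc m)), ops_mat (weights3 l) (of_nat (Suc m))) =
    (ops_mat (weights2 l) (of_nat (Suc n)), ops_mat (weights3 l) (of_nat (Suc n)))"
  then have "(of_nat (Suc m) :: complex) powi k = of_nat (Suc n) powi k"
    using k by (auto simp: ops_mat_eq_iff simp del: of_nat_Suc)
  then show "m = n"
    using \<open>k \<noteq> 0\<close> of_nat_Suc_power_int_inject by blast
qed

lemma ops_act_limit_fixed:
  assumes lim: "\<And>x y. ((\<lambda>t. ops_act l t F x y) \<longlongrightarrow> H x y) at_infinity"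
    and "s \<noteq> 0"
  shows "ops_act l s H = H"
proof (intro ext)
  fix x y
  let ?x = "ops_mat (weights2 l) s *v x" and ?y = "ops_mat (weights3 l) s *v y"
  have "((\<lambda>t. ops_act l t F ?x ?y) \<longlongrightarrow> ops_act l s H x y) at_infinity"
    using lim by (simp add: ops_act_def act_def)
  moreover have "((\<lambda>t. ops_act l t F ?x ?y) \<longlongrightarrow> H x y) at_infinity"
  proof -
    have "filterlim (\<lambda>t. s * t) at_infinity at_infinity"
      using \<open>s \<noteq> 0\<close> by (intro tendsto_mult_filterlim_at_infinity[OF tendsto_const] filterlim_ident)
    then have "((\<lambda>t. ops_act l (s * t) F x y) \<longlongrightarrow> H x y) at_infinity"
      by (rule filterlim_compose[OF lim])
    moreover have "ops_act l t F ?x ?y = ops_act l (s * t) F x y" for t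
      by (simp add: ops_act_def act_def matrix_vector_mul_assoc ops_mat_mult mult.commute)
    ultimately show ?thesis
      by simp
  qed
  ultimately show "ops_act l s H x y = H x y"
    using tendsto_unique trivial_limit_at_infinity by blast
qed

lemma not_properly_stable_if_ops_limit:
  assumes l: "nontrivial_ops l"
    and lim: "\<And>x y. ((\<lambda>t. ops_act l t F x y) \<longlongrightarrow> H x y) at_infinity"
  shows "\<not> properly_stable F"
proof
  assume ps: "properly_stable F"
  define g where "g n = ops_mat (weights2 l) (of_nat (Suc n))" for n
  define h where "h n = ops_mat (weights3 l) (of_nat (Suc n))" for n
  have gh: "g n \<in> SL2 \<and> h n \<in> SL3" for n
    unfolding g_def h_def by (intro conjI ops_mat_in_SL) (simp_all del: of_nat_Suc)
  have "filterlim (\<lambda>n. of_nat (Suc n) :: complex) at_infinity sequentially"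
    using tendsto_of_nat filterlim_sequentially_Suc by blast
  then have "(\<lambda>n. act (g n) (h n) F x y) \<longlonglongrightarrow> H x y" for x y
    using filterlim_compose[OF lim] by (simp add: g_def h_def ops_act_def)
  moreover have "closed_orbit F"
    using ps by (simp add: properly_stable_def)
  ultimately have "H \<in> orbit F"
    using gh unfolding closed_orbit_def by blast
  then have "finite (stabilizer H)"
    using ps finite_stabilizer_act by (auto simp: orbit_def properly_stable_def)
  moreover have "range (\<lambda>n. (g n, h n)) \<subseteq> stabilizer H"
    using gh ops_act_limit_fixed[OF lim] by (auto simp: stabilizer_def g_def h_def ops_act_def simp del: of_nat_Suc)
  ultimately have "finite (range (\<lambda>n. (g n, h n)))"
    by (rule finite_subset[rotated])
  then show False
    using inj_ops_of_nat_Suc[OF l] by (simp add: g_def h_def finite_image_iff)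
qed

lemma not_properly_stable_if_ops_extends:
  assumes "nontrivial_ops l"
    and eq: "\<And>e. e \<noteq> 0 \<Longrightarrow> ops_act l (inverse e) F = P e"
    and cont: "\<And>x y. isCont (\<lambda>e. P e x y) 0"
  shows "\<not> properly_stable F"
proof (rule not_properly_stable_if_ops_limit[OF assms(1)])
  fix x y
  have "((\<lambda>t. P (inverse t) x y) \<longlongrightarrow> P 0 x y) at_infinity"
    using isCont_tendsto_compose[OF cont tendsto_inverse_0] .
  moreover have "\<forall>\<^sub>F t in at_infinity. P (inverse t) x y = ops_act l t F x y"
  proof (rule eventually_at_infinity[THEN iffD2, OF exI[of _ 1]], intro allI impI)
    fix t :: complex assume "1 \<le> norm t"
    then have "t \<noteq> 0" by auto
    then show "P (inverse t) x y = ops_act l t F x y"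
      using eq[of "inverse t"] by simp
  qed
  ultimately show "((\<lambda>t. ops_act l t F x y) \<longlongrightarrow> P 0 x y) at_infinity"
    by (rule Lim_transform_eventually)
qed

section \<open>Destabilizing the seven families\<close>

definition ternary_form :: "nat \<Rightarrow> (nat \<times> nat \<Rightarrow> 'a::comm_semiring_1) \<Rightarrow> 'a \<Rightarrow> 'a \<Rightarrow> 'a \<Rightarrow> 'a" where
  "ternary_form d a p q r = (\<Sum>(v, w)\<in>{(v, w). v + w \<le> d}. a (v, w) * p ^ v * q ^ w * r ^ (d - v - w))"

lemma form3_eq_ternary_form: "form3 d a y = ternary_form d a (y$0) (y$1) (y$2)"
  by (simp add: form3_def ternary_form_def)

lemma ternary_form_scale: "ternary_form d a (k * p) (k * q) (k * r) = k ^ d * ternary_form d a p q r"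
  unfolding ternary_form_def sum_distrib_left
proof (rule sum.cong[OF refl], clarify)
  fix v w assume "v + w \<le> d"
  then have "k ^ d = k ^ v * k ^ w * k ^ (d - v - w)"
    by (simp flip: power_add)
  then show "a (v, w) * (k * p) ^ v * (k * q) ^ w * (k * r) ^ (d - v - w) =
      k ^ d * (a (v, w) * p ^ v * q ^ w * r ^ (d - v - w))"
    by (simp add: power_mult_distrib mult_ac)
qed

lemma form2_scale: "form2 d a (k * s) (k * t) = k ^ d * form2 d a s t"
  unfolding form2_def sum_distrib_left
proof (rule sum.cong[OF refl])
  fix w assume "w \<in> {..d}"
  then have "k ^ d = k ^ w * k ^ (d - w)"
    by (simp flip: power_add)
  then show "a w * (k * s) ^ w * (k * t) ^ (d - w) = k ^ d * (a w * s ^ w * t ^ (d - w))"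
    by (simp add: power_mult_distrib)
qed

lemma continuous_ternary_form [continuous_intros]:
  "continuous F p \<Longrightarrow> continuous F q \<Longrightarrow> continuous F r \<Longrightarrow>
   continuous F (\<lambda>e. ternary_form d a (p e) (q e) (r e))"
  for a :: "nat \<times> nat \<Rightarrow> 'a::real_normed_field"
  unfolding ternary_form_def split_def by (intro continuous_intros)

lemma continuous_form2 [continuous_intros]:
  "continuous F p \<Longrightarrow> continuous F q \<Longrightarrow> continuous F (\<lambda>e. form2 d a (p e) (q e))"
  unfolding form2_def by (intro continuous_intros)

lemma nontrivial_lam': "nontrivial_ops (lam' i)"
  by (simp add: lam'_def nontrivial_ops_def)

lemmas ops_act_lam'_simps =
  ops_act_apply lam'_def weights2_def weights3_def power_int_minus power_inverse
  form3_eq_ternary_form form2_scale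

lemma not_properly_stable_N1:
  "\<not> properly_stable (\<lambda>x y. x$1^2 * form3 3 c y + x$0 * x$1 * y$2 * form2 2 q (y$0) (y$1)
      + x$0^2 * y$2^2 * form3 1 l y)" (is "\<not> properly_stable ?F")
proof (rule not_properly_stable_if_ops_extends[OF nontrivial_lam'[of 1]])
  fix e :: complex assume "e \<noteq> 0"
  then have "e^4 * r = inverse (e^2) * (e^6 * r)" for r
    by (simp add: field_simps eval_nat_numeral)
  then have scale: "ternary_form d a (inverse (e^2) * p) (inverse (e^2) * q) (e^4 * r)
      = inverse (e^2)^d * ternary_form d a p q (e^6 * r)" for d a p q r
    by (simp only: ternary_form_scale)
  from \<open>e \<noteq> 0\<close> show "ops_act (lam' 1) (inverse e) ?F = (\<lambda>x y.
      x$1^2 * ternary_form 3 c (y$0) (y$1) (e^6 * y$2) + x$0 * x$1 * y$2 * form2 2 q (y$0) (y$1)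
      + x$0^2 * y$2^2 * ternary_form 1 l (y$0) (y$1) (e^6 * y$2))"
    by (simp add: ops_act_lam'_simps scale fun_eq_iff) (simp add: field_simps)
qed (intro continuous_intros)

lemma not_properly_stable_N2:
  "\<not> properly_stable (\<lambda>x y. x$1^2 * form3 3 c0 y
      + x$0 * x$1 * (form2 3 c1 (y$1) (y$2) + y$0 * y$2 * form2 1 l (y$1) (y$2))
      + \<mu> * x$0^2 * y$2^3)" (is "\<not> properly_stable ?F")
proof (rule not_properly_stable_if_ops_extends[OF nontrivial_lam'[of 2]])
  fix e :: complex assume "e \<noteq> 0"
  then have "q = inverse (e^2) * (e^2 * q)" "e^2 * r = inverse (e^2) * (e^4 * r)" for q r
    by (simp_all add: field_simps eval_nat_numeral)
  then have scale: "ternary_form d a (inverse (e^2) * p) q (e^2 * r)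
      = inverse (e^2)^d * ternary_form d a p (e^2 * q) (e^4 * r)" for d a p q r
    by (metis ternary_form_scale)
  from \<open>e \<noteq> 0\<close> show "ops_act (lam' 2) (inverse e) ?F = (\<lambda>x y.
      x$1^2 * ternary_form 3 c0 (y$0) (e^2 * y$1) (e^4 * y$2)
      + x$0 * x$1 * (form2 3 c1 (y$1) (e^2 * y$2) + y$0 * y$2 * form2 1 l (y$1) (e^2 * y$2))
      + \<mu> * x$0^2 * y$2^3)"
    by (simp add: ops_act_lam'_simps scale fun_eq_iff) (simp add: field_simps)
qed (intro continuous_intros)

lemma not_properly_stable_N3:
  "\<not> properly_stable (\<lambda>x y.
      x$1^2 * (form2 3 c1 (y$1) (y$2) + y$0 * form2 2 q1 (y$1) (y$2) + y$0^2 * form2 1 l (y$1) (y$2))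
      + x$0 * x$1 * (form2 3 c2 (y$1) (y$2) + y$0 * form2 2 q2 (y$1) (y$2))
      + x$0^2 * form2 3 c0 (y$1) (y$2))" (is "\<not> properly_stable ?F")
proof (rule not_properly_stable_if_ops_extends[OF nontrivial_lam'[of 3]])
  fix e :: complex assume "e \<noteq> 0"
  then show "ops_act (lam' 3) (inverse e) ?F = (\<lambda>x y.
      x$1^2 * (e^12 * form2 3 c1 (y$1) (y$2) + e^6 * y$0 * form2 2 q1 (y$1) (y$2)
        + y$0^2 * form2 1 l (y$1) (y$2))
      + x$0 * x$1 * (e^6 * form2 3 c2 (y$1) (y$2) + y$0 * form2 2 q2 (y$1) (y$2))
      + x$0^2 * form2 3 c0 (y$1) (y$2))"
    by (simp add: ops_act_lam'_simps fun_eq_iff) (simp add: field_simps)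
qed (intro continuous_intros)

lemma not_properly_stable_N4:
  "\<not> properly_stable (\<lambda>x y.
      x$1^2 * (form2 3 c0 (y$1) (y$2) + y$0 * form2 2 q0 (y$1) (y$2))
      + x$0 * x$1 * (form2 3 c1 (y$1) (y$2) + y$0 * form2 2 q1 (y$1) (y$2))
      + x$0^2 * (form2 3 c2 (y$1) (y$2) + y$0 * form2 2 q2 (y$1) (y$2)))" (is "\<not> properly_stable ?F")
proof (rule not_properly_stable_if_ops_extends[OF nontrivial_lam'[of 4]])
  fix e :: complex assume "e \<noteq> 0"
  then show "ops_act (lam' 4) (inverse e) ?F = (\<lambda>x y.
      x$1^2 * (e^3 * form2 3 c0 (y$1) (y$2) + y$0 * form2 2 q0 (y$1) (y$2))
      + x$0 * x$1 * (e^3 * form2 3 c1 (y$1) (y$2) + y$0 * form2 2 q1 (y$1) (y$2))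
      + x$0^2 * (e^3 * form2 3 c2 (y$1) (y$2) + y$0 * form2 2 q2 (y$1) (y$2)))"
    by (simp add: ops_act_lam'_simps fun_eq_iff) (simp add: field_simps)
qed (intro continuous_intros)

lemma not_properly_stable_N5:
  "\<not> properly_stable (\<lambda>x y.
      x$1^2 * (form2 3 c0 (y$1) (y$2) + y$0 * form2 2 q0 (y$1) (y$2) + \<mu> * y$0^2 * y$2)
      + x$0 * x$1 * (form2 3 c1 (y$1) (y$2) + y$0 * y$2 * form2 1 l (y$1) (y$2))
      + x$0^2 * y$2 * (form2 2 q2 (y$1) (y$2) + \<nu> * y$0 * y$2))" (is "\<not> properly_stable ?F")
proof (rule not_properly_stable_if_ops_extends[OF nontrivial_lam'[of 5]])
  fix e :: complex assume "e \<noteq> 0"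
  then show "ops_act (lam' 5) (inverse e) ?F = (\<lambda>x y.
      x$1^2 * (e^2 * form2 3 c0 (y$1) (e^2 * y$2) + y$0 * form2 2 q0 (y$1) (e^2 * y$2) + \<mu> * y$0^2 * y$2)
      + x$0 * x$1 * (form2 3 c1 (y$1) (e^2 * y$2) + y$0 * y$2 * form2 1 l (y$1) (e^2 * y$2))
      + x$0^2 * y$2 * (form2 2 q2 (y$1) (e^2 * y$2) + \<nu> * y$0 * y$2))"
    by (simp add: ops_act_lam'_simps fun_eq_iff) (simp add: field_simps)
qed (intro continuous_intros)

lemma not_properly_stable_N6: "\<not> properly_stable (\<lambda>x y. y$2 * form22 q x y)"
  (is "\<not> properly_stable ?F")
proof (rule not_properly_stable_if_ops_extends[OF nontrivial_lam'[of 6]])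
  fix e :: complex assume "e \<noteq> 0"
  then have "e^2 * r = inverse e * (e^3 * r)" for r
    by (simp add: field_simps eval_nat_numeral)
  then have scale: "ternary_form d a (inverse e * p) (inverse e * q) (e^2 * r)
      = inverse e^d * ternary_form d a p q (e^3 * r)" for d a p q r
    by (simp only: ternary_form_scale)
  from \<open>e \<noteq> 0\<close> show "ops_act (lam' 6) (inverse e) ?F = (\<lambda>x y.
      y$2 * (\<Sum>u\<le>2. x$0^u * x$1^(2 - u) * ternary_form 2 (q u) (y$0) (y$1) (e^3 * y$2)))"
    by (simp add: ops_act_lam'_simps scale form22_def fun_eq_iff) (simp add: field_simps flip: sum_divide_distrib)
qed (intro continuous_intros)

lemma not_properly_stable_N7:
  "\<not> properly_stable (\<lambda>x y. x$1 * (x$0 * form3 3 c0 y + x$1 * form3 3 c1 y))"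
  (is "\<not> properly_stable ?F")
proof (rule not_properly_stable_if_ops_extends[OF nontrivial_lam'[of 7]])
  fix e :: complex assume "e \<noteq> 0"
  then show "ops_act (lam' 7) (inverse e) ?F = (\<lambda>x y.
      x$1 * x$0 * form3 3 c0 y + e^2 * x$1^2 * form3 3 c1 y)"
    by (simp add: ops_act_lam'_simps fun_eq_iff) (simp add: field_simps power2_eq_square)
qed (intro continuous_intros)

section \<open>Sets of monomials of non-positive weight\<close>

lemma Mneg_subset_iff:
  "Mneg l \<subseteq> Mneg l' \<longleftrightarrow> (\<forall>m\<in>mons. 0 < wt l' m \<longrightarrow> 0 < wt l m)"
  by (auto simp: Mneg_def not_less)

lemma ball_mons:
  "(\<forall>m\<in>mons. P m) \<longleftrightarrow> (\<forall>u<3. \<forall>v<4. \<forall>w<4. v + w \<le> 3 \<longrightarrow> P (u, v, w))"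
  by (auto simp: mons_def)

lemmas Mneg_subset_lam'_simps =
  Mneg_subset_iff ball_mons All_less_Suc eval_nat_numeral wt_def lam'_def normalized_ops_def

lemma Mneg_subset_lam'_1:
  "normalized_ops (a, b, c) \<Longrightarrow> 0 < c \<Longrightarrow> b - c < 2 * a \<Longrightarrow> Mneg (a, b, c) \<subseteq> Mneg (lam' 1)"
  by (simp add: Mneg_subset_lam'_simps)

lemma Mneg_subset_lam'_2:
  "normalized_ops (a, b, c) \<Longrightarrow> c < b \<Longrightarrow> 0 < b + 2 * c \<Longrightarrow> 2 * b + c < 2 * a \<Longrightarrow>
    Mneg (a, b, c) \<subseteq> Mneg (lam' 2)"
  by (simp add: Mneg_subset_lam'_simps)

lemma Mneg_subset_lam'_3:
  "normalized_ops (a, b, c) \<Longrightarrow> b + 2 * c < 2 * a \<Longrightarrow> 2 * a < 3 * b \<Longrightarrow>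
    Mneg (a, b, c) \<subseteq> Mneg (lam' 3)"
  by (simp add: Mneg_subset_lam'_simps)

lemma Mneg_subset_lam'_4:
  "normalized_ops (a, b, c) \<Longrightarrow> 2 * a < b - c \<Longrightarrow> Mneg (a, b, c) \<subseteq> Mneg (lam' 4)"
  by (simp add: Mneg_subset_lam'_simps)

lemma Mneg_subset_lam'_5:
  "normalized_ops (a, b, c) \<Longrightarrow> c < b \<Longrightarrow> 0 < b + 2 * c \<Longrightarrow> b - c \<le> 2 * a \<Longrightarrow>
    2 * a < 2 * b + c \<Longrightarrow> Mneg (a, b, c) \<subseteq> Mneg (lam' 5)"
  by (simp add: Mneg_subset_lam'_simps)

lemma Mneg_subset_lam'_6:
  "normalized_ops (a, b, c) \<Longrightarrow> 2 * a < 3 * c \<Longrightarrow> Mneg (a, b, c) \<subseteq> Mneg (lam' 6)"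
  by (simp add: Mneg_subset_lam'_simps)

lemma Mneg_subset_lam'_7:
  "normalized_ops (a, b, c) \<Longrightarrow> 3 * (b + c) < 2 * a \<Longrightarrow> Mneg (a, b, c) \<subseteq> Mneg (lam' 7)"
  by (simp add: Mneg_subset_lam'_simps)

lemma normalized_Mneg_subset_lam':
  assumes "normalized_ops l" "nontrivial_ops l"
  shows "\<exists>i\<in>{1..7}. Mneg l \<subseteq> Mneg (lam' i)"
proof -
  obtain a b c where l: "l = (a, b, c)"
    by (cases l)
  with assms have norm: "normalized_ops (a, b, c)"
    by simp
  from assms consider "0 < c" "b - c < 2 * a" | "c < b" "0 < b + 2 * c" "2 * b + c < 2 * a"
    | "b + 2 * c < 2 * a" "2 * a < 3 * b" | "2 * a < b - c"
    | "c < b" "0 < b + 2 * c" "b - c \<le> 2 * a" "2 * a < 2 * b + c" | "2 * a < 3 * c"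
    | "3 * (b + c) < 2 * a"
    unfolding l normalized_ops_def nontrivial_ops_def by fastforce
  then show ?thesis
    unfolding l using Mneg_subset_lam'_1[OF norm] Mneg_subset_lam'_2[OF norm] Mneg_subset_lam'_3[OF norm]
      Mneg_subset_lam'_4[OF norm] Mneg_subset_lam'_5[OF norm] Mneg_subset_lam'_6[OF norm]
      Mneg_subset_lam'_7[OF norm]
    by cases force+
qed

theorem lemma3p1:
  shows "(\<forall>l. normalized_ops l \<and> nontrivial_ops l \<longrightarrow>
            (\<exists>i\<in>{1..7}. Mneg l \<subseteq> Mneg (lam' i)))
   \<and> (\<forall>c q l. \<not> properly_stable (\<lambda>x y.
         x$1^2 * form3 3 c y + x$0 * x$1 * y$2 * form2 2 q (y$0) (y$1)
         + x$0^2 * y$2^2 * form3 1 l y))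
   \<and> (\<forall>c0 c1 l \<mu>. \<not> properly_stable (\<lambda>x y.
         x$1^2 * form3 3 c0 y
         + x$0 * x$1 * (form2 3 c1 (y$1) (y$2) + y$0 * y$2 * form2 1 l (y$1) (y$2))
         + \<mu> * x$0^2 * y$2^3))
   \<and> (\<forall>c0 c1 c2 q1 q2 l. \<not> properly_stable (\<lambda>x y.
         x$1^2 * (form2 3 c1 (y$1) (y$2) + y$0 * form2 2 q1 (y$1) (y$2) + y$0^2 * form2 1 l (y$1) (y$2))
         + x$0 * x$1 * (form2 3 c2 (y$1) (y$2) + y$0 * form2 2 q2 (y$1) (y$2))
         + x$0^2 * form2 3 c0 (y$1) (y$2)))
   \<and> (\<forall>c0 c1 c2 q0 q1 q2. \<not> properly_stable (\<lambda>x y.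
         x$1^2 * (form2 3 c0 (y$1) (y$2) + y$0 * form2 2 q0 (y$1) (y$2))
         + x$0 * x$1 * (form2 3 c1 (y$1) (y$2) + y$0 * form2 2 q1 (y$1) (y$2))
         + x$0^2 * (form2 3 c2 (y$1) (y$2) + y$0 * form2 2 q2 (y$1) (y$2))))
   \<and> (\<forall>c0 c1 q0 q2 l \<mu> \<nu>. \<not> properly_stable (\<lambda>x y.
         x$1^2 * (form2 3 c0 (y$1) (y$2) + y$0 * form2 2 q0 (y$1) (y$2) + \<mu> * y$0^2 * y$2)
         + x$0 * x$1 * (form2 3 c1 (y$1) (y$2) + y$0 * y$2 * form2 1 l (y$1) (y$2))
         + x$0^2 * y$2 * (form2 2 q2 (y$1) (y$2) + \<nu> * y$0 * y$2)))
   \<and> (\<forall>q. \<not> properly_stable (\<lambda>x y. y$2 * form22 q x y))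
   \<and> (\<forall>c0 c1. \<not> properly_stable (\<lambda>x y.
         x$1 * (x$0 * form3 3 c0 y + x$1 * form3 3 c1 y)))"
  by (intro conjI allI impI normalized_Mneg_subset_lam' not_properly_stable_N1 not_properly_stable_N2
      not_properly_stable_N3 not_properly_stable_N4 not_properly_stable_N5 not_properly_stable_N6
      not_properly_stable_N7) simp_all

end
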